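(* Let $\bar n\ge1$ and let $\theta_2>0$ satisfy $\sin(\theta_2\sqrt n)\neq0$ for all $n\in\{1,\dots,9\bar n+8\}$. With $\Phi$ the Kraus map $\Phi(\rho)=M_g\rho M_g^\dagger+M_e\rho M_e^\dagger+M_m\rho M_m^\dagger$ ($M_g,M_e,M_m$ as in the context), the subspace $\mathcal{H}_0^{9\bar n+8}$ is invariant under $M_g,M_e,M_m$, and for every density operator $\rho_0$ supported in $\mathcal{H}_0^{9\bar n+8}$ the sequence $\rho_{k+1}=\Phi(\rho_k)$ converges to a density operator $\rho_\infty$ supported on $\mathrm{span}\{|\bar n\rangle,|9\bar n+8\rangle\}$.
   Context: Let $\mathcal{H}$ be the Hilbert space with orthonormal (Fock) basis $\{|n\rangle\}_{n\in\mathbb{N}}$ ($\mathbb{N}$ includes $0$). Let $\mathbf{a}=\sum_{n\ge1}\sqrt{n}\,|n-1\rangle\langle n|$, $\mathbf{a}^\dagger$ its adjoint, $\mathbf{N}=\mathbf{a}^\dagger\mathbf{a}=\sum_n n|n\rangle\langle n|$, $\mathbf{I}$ the identity, and for $h:\mathbb{N}\to\mathbb{C}$ write $h(\mathbf{N})=\sum_n h(n)|n\rangle\langle n|$. Let $\mathcal{H}_{n_1}^{n_2}=\mathrm{span}\{|n_1\rangle,\dots,|n_2\rangle\}$. Fix $\theta_1=\pi/\sqrt{\bar n+1}$, $\theta_2>0$ and an arbitrary real phase $\varphi$. Define $M_g=\mathbf{a}^\dagger\,\big(1+\cos\tfrac{\theta_2\sqrt{\mathbf{N}}}{2}\big)\,\frac{\sin(\theta_1\sqrt{\mathbf{N}+\mathbf{I}})}{2\sqrt{\mathbf{N}+\mathbf{I}}}$,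 $M_e=\cos^2\tfrac{\theta_1\sqrt{\mathbf{N}+\mathbf{I}}}{2}\,\cos\tfrac{\theta_2\sqrt{\mathbf{N}}}{2}-\sin^2\tfrac{\theta_1\sqrt{\mathbf{N}+\mathbf{I}}}{2}$, $M_m=e^{i\varphi}\,\mathbf{a}\,\frac{\sin(\theta_2\sqrt{\mathbf{N}}/2)}{\sqrt{\mathbf{N}}}\,\cos\tfrac{\theta_1\sqrt{\mathbf{N}+\mathbf{I}}}{2}$ (the value at $n=0$ of $\sin(\theta_2\sqrt{n}/2)/\sqrt{n}$ is irrelevant). *)

theory Defs
  imports "HOL-Analysis.Analysis"
begin

text \<open>Operators on the Fock space are represented by their matrix entries in the
Fock basis: an operator is a function op i k = <i|M|k>.\<close>

type_synonym fock_op = "nat \<Rightarrow> nat \<Rightarrow> complex"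

definition theta1 :: "nat \<Rightarrow> real" where
  "theta1 nbar = pi / sqrt (real nbar + 1)"

text \<open>M_g = a^dag (1 + cos(theta2 sqrt N / 2)) sin(theta1 sqrt(N+1)) / (2 sqrt(N+1)):
  M_g |k> = sqrt(k+1) f(k) |k+1>.\<close>
definition Mg :: "nat \<Rightarrow> real \<Rightarrow> fock_op" where
  "Mg nbar \<theta>2 i k =
     (if i = k + 1 then
        complex_of_real (sqrt (real k + 1) *
          ((1 + cos (\<theta>2 * sqrt (real k) / 2)) *
           (sin (theta1 nbar * sqrt (real k + 1)) / (2 * sqrt (real k + 1)))))
      else 0)"

definition Me :: "nat \<Rightarrow> real \<Rightarrow> fock_op" where
  "Me nbar \<theta>2 i k =
     (if i = k then
        complex_of_real ((cos (theta1 nbar * sqrt (real k + 1) / 2))\<^sup>2 * cos (\<theta>2 * sqrt (real k) / 2)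
                         - (sin (theta1 nbar * sqrt (real k + 1) / 2))\<^sup>2)
      else 0)"

text \<open>M_m = e^{i phi} a (sin(theta2 sqrt N/2)/sqrt N) cos(theta1 sqrt(N+1)/2):
  M_m |k> = e^{i phi} sqrt k g(k) |k-1> (zero for k = 0).\<close>
definition Mm :: "nat \<Rightarrow> real \<Rightarrow> real \<Rightarrow> fock_op" where
  "Mm nbar \<theta>2 \<phi> i k =
     (if k = i + 1 then
        cis \<phi> * complex_of_real (sqrt (real k) *
          ((sin (\<theta>2 * sqrt (real k) / 2) / sqrt (real k)) *
           cos (theta1 nbar * sqrt (real k + 1) / 2)))
      else 0)"

definition sandwich :: "fock_op \<Rightarrow> fock_op \<Rightarrow> fock_op" where
  "sandwich M \<rho> i j = (\<Sum>\<^sub>\<infinity>(k, l)\<in>UNIV. M i k * \<rho> k l * cnj (M j l))"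

definition Phi :: "nat \<Rightarrow> real \<Rightarrow> real \<Rightarrow> fock_op \<Rightarrow> fock_op" where
  "Phi nbar \<theta>2 \<phi> \<rho> i j =
     sandwich (Mg nbar \<theta>2) \<rho> i j + sandwich (Me nbar \<theta>2) \<rho> i j
     + sandwich (Mm nbar \<theta>2 \<phi>) \<rho> i j"

definition invariant_sub :: "nat \<Rightarrow> fock_op \<Rightarrow> bool" where
  "invariant_sub D M \<longleftrightarrow> (\<forall>i k. k \<le> D \<longrightarrow> D < i \<longrightarrow> M i k = 0)"

definition density_supported :: "nat set \<Rightarrow> fock_op \<Rightarrow> bool" where
  "density_supported S \<rho> \<longleftrightarrow>
     (\<forall>i j. (i \<notin> S \<or> j \<notin> S) \<longrightarrow> \<rho> i j = 0) \<and>
     (\<forall>i j. \<rho> j i = cnj (\<rho> i j)) \<and>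
     (\<forall>v :: nat \<Rightarrow> complex. 0 \<le> Re (\<Sum>i\<in>S. \<Sum>j\<in>S. cnj (v i) * \<rho> i j * v j)) \<and>
     (\<Sum>i\<in>S. \<rho> i i) = 1"

end

theory Submission
  imports Defs
begin

text \<open>
  All three Kraus operators are shifts by +1, 0, -1 in the Fock basis, so Phi acts entrywise as
  a "shift channel" with real coefficient sequences G, E, N satisfying G^2 + E^2 + N^2 = 1.
  For D = 9 nbar + 8 the raising coefficient vanishes at D (so H_0^D is invariant and Phi maps
  density operators on H_0^D to density operators on H_0^D), while E = -1 at the two levels
  nbar and D. On the diagonal the channel is a birth-death chain: the populations of nbar and D
  can only grow, and every bounded nondecreasing sequence has summable increments. Chaining
  through the nondegenerate neighbouring coefficients, the population of every other level is
  summable, hence tends to zero, and by the 2x2 minor bound so do all coherences touching it.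
  The entries between levels nbar and D change only by summable amounts, hence converge, and
  a limit of density operators is a density operator.
\<close>

lemma infsum_single:
  fixes f :: "'a \<Rightarrow> complex"
  assumes "\<And>x. x \<noteq> a \<Longrightarrow> f x = 0"
  shows "infsum f UNIV = f a"
proof -
  have "infsum f UNIV = infsum f {a}"
    by (rule infsum_cong_neutral) (use assms in auto)
  then show ?thesis by simp
qed

definition g_coef :: "nat \<Rightarrow> real \<Rightarrow> nat \<Rightarrow> real" where
  "g_coef nbar \<theta>2 k = (1 + cos (\<theta>2 * sqrt (real k) / 2)) * sin (theta1 nbar * sqrt (real k + 1)) / 2"

definition e_coef :: "nat \<Rightarrow> real \<Rightarrow> nat \<Rightarrow> real" where
  "e_coef nbar \<theta>2 k = (cos (theta1 nbar * sqrt (real k + 1) / 2))\<^sup>2 * cos (\<theta>2 * sqrt (real k) / 2)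
                       - (sin (theta1 nbar * sqrt (real k + 1) / 2))\<^sup>2"

definition m_coef :: "nat \<Rightarrow> real \<Rightarrow> nat \<Rightarrow> real" where
  "m_coef nbar \<theta>2 k = sin (\<theta>2 * sqrt (real k) / 2) * cos (theta1 nbar * sqrt (real k + 1) / 2)"

lemma Mg_entry: "Mg nbar \<theta>2 i k = (if i = k + 1 then complex_of_real (g_coef nbar \<theta>2 k) else 0)"
proof -
  have "sqrt (real k + 1) > 0" by simp
  then show ?thesis unfolding Mg_def g_coef_def by (simp add: field_simps)
qed

lemma Me_entry: "Me nbar \<theta>2 i k = (if i = k then complex_of_real (e_coef nbar \<theta>2 k) else 0)"
  unfolding Me_def e_coef_def by simp

lemma Mm_entry:
  "Mm nbar \<theta>2 \<phi> i k = (if k = i + 1 then cis \<phi> * complex_of_real (m_coef nbar \<theta>2 k) else 0)"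
  unfolding Mm_def m_coef_def by auto

definition shift_channel ::
    "(nat \<Rightarrow> real) \<Rightarrow> (nat \<Rightarrow> real) \<Rightarrow> (nat \<Rightarrow> real) \<Rightarrow> fock_op \<Rightarrow> fock_op" where
  "shift_channel G E N \<rho> i j =
     (if 0 < i \<and> 0 < j then complex_of_real (G (i - 1)) * \<rho> (i - 1) (j - 1) * complex_of_real (G (j - 1))
      else 0)
     + complex_of_real (E i) * \<rho> i j * complex_of_real (E j)
     + complex_of_real (N (i + 1)) * \<rho> (i + 1) (j + 1) * complex_of_real (N (j + 1))"

lemma sandwich_Mg: "sandwich (Mg nbar \<theta>2) \<rho> i j =
   (if 0 < i \<and> 0 < j then complex_of_real (g_coef nbar \<theta>2 (i - 1)) * \<rho> (i - 1) (j - 1)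
      * complex_of_real (g_coef nbar \<theta>2 (j - 1)) else 0)"
proof (cases "0 < i \<and> 0 < j")
  case True
  have "sandwich (Mg nbar \<theta>2) \<rho> i j
      = (\<lambda>(k, l). Mg nbar \<theta>2 i k * \<rho> k l * cnj (Mg nbar \<theta>2 j l)) (i - 1, j - 1)"
    unfolding sandwich_def by (rule infsum_single) (auto simp: Mg_entry split: if_splits)
  then show ?thesis using True by (simp add: Mg_entry)
next
  case False
  then show ?thesis unfolding sandwich_def by (subst infsum_0) (auto simp: Mg_entry)
qed

lemma sandwich_Me: "sandwich (Me nbar \<theta>2) \<rho> i j =
   complex_of_real (e_coef nbar \<theta>2 i) * \<rho> i j * complex_of_real (e_coef nbar \<theta>2 j)"
proof -
  have "sandwich (Me nbar \<theta>2) \<rho> i j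
      = (\<lambda>(k, l). Me nbar \<theta>2 i k * \<rho> k l * cnj (Me nbar \<theta>2 j l)) (i, j)"
    unfolding sandwich_def by (rule infsum_single) (auto simp: Me_entry split: if_splits)
  then show ?thesis by (simp add: Me_entry)
qed

lemma sandwich_Mm: "sandwich (Mm nbar \<theta>2 \<phi>) \<rho> i j =
   complex_of_real (m_coef nbar \<theta>2 (i + 1)) * \<rho> (i + 1) (j + 1) * complex_of_real (m_coef nbar \<theta>2 (j + 1))"
proof -
  have "sandwich (Mm nbar \<theta>2 \<phi>) \<rho> i j
      = (\<lambda>(k, l). Mm nbar \<theta>2 \<phi> i k * \<rho> k l * cnj (Mm nbar \<theta>2 \<phi> j l)) (i + 1, j + 1)"
    unfolding sandwich_def by (rule infsum_single) (auto simp: Mm_entry split: if_splits)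
  also have "\<dots> = (cis \<phi> * cnj (cis \<phi>)) * (complex_of_real (m_coef nbar \<theta>2 (i + 1)) * \<rho> (i + 1) (j + 1)
                    * complex_of_real (m_coef nbar \<theta>2 (j + 1)))"
    by (simp add: Mm_entry algebra_simps)
  finally show ?thesis by (simp add: cis_cnj cis_mult)
qed

lemma Phi_shift_channel:
  "Phi nbar \<theta>2 \<phi> = shift_channel (g_coef nbar \<theta>2) (e_coef nbar \<theta>2) (m_coef nbar \<theta>2)"
  unfolding Phi_def shift_channel_def sandwich_Mg sandwich_Me sandwich_Mm by (intro ext) (rule refl)

text \<open>Completeness relation sum_k M_k^dag M_k = I, which makes Phi trace preserving.\<close>
lemma coef_completeness: "(g_coef nbar \<theta>2 k)\<^sup>2 + (e_coef nbar \<theta>2 k)\<^sup>2 + (m_coef nbar \<theta>2 k)\<^sup>2 = 1"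
proof -
  define a where "a = \<theta>2 * sqrt (real k) / 2"
  define b where "b = theta1 nbar * sqrt (real k + 1) / 2"
  have double: "theta1 nbar * sqrt (real k + 1) = 2 * b" by (simp add: b_def)
  have "(sin a)\<^sup>2 = 1 - (cos a)\<^sup>2" "(sin b)\<^sup>2 = 1 - (cos b)\<^sup>2" by (simp_all add: sin_squared_eq)
  then have "((1 + cos a) * (2 * sin b * cos b) / 2)\<^sup>2 + ((cos b)\<^sup>2 * cos a - (sin b)\<^sup>2)\<^sup>2
               + (sin a * cos b)\<^sup>2 = 1"
    by algebra
  then show ?thesis
    unfolding g_coef_def e_coef_def m_coef_def double sin_double by (simp add: a_def b_def)
qed

lemma sum_single_index:
  fixes f :: "'a \<Rightarrow> 'b::comm_monoid_add"
  assumes "finite S" "a \<in> S" "\<And>i. i \<in> S \<Longrightarrow> i \<noteq> a \<Longrightarrow> f i = 0"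
  shows "sum f S = f a"
proof -
  have "sum f S = sum f {a}"
    by (rule sum.mono_neutral_right) (use assms in auto)
  then show ?thesis by simp
qed

lemma sum_two_indices:
  fixes f :: "'a \<Rightarrow> 'b::comm_monoid_add"
  assumes "finite S" "a \<in> S" "b \<in> S" "a \<noteq> b" "\<And>i. i \<in> S \<Longrightarrow> i \<noteq> a \<Longrightarrow> i \<noteq> b \<Longrightarrow> f i = 0"
  shows "sum f S = f a + f b"
proof -
  have "sum f S = sum f {a, b}"
    by (rule sum.mono_neutral_right) (use assms in auto)
  then show ?thesis using assms(4) by simp
qed

lemma nonneg_quadratic_discriminant:
  fixes p q N :: real
  assumes quad: "\<And>t. 0 \<le> t * t * p - 2 * t * N + N * q" and "0 \<le> p" "0 \<le> q" "0 \<le> N"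
  shows "N \<le> p * q"
proof (cases "N = 0")
  case True then show ?thesis using assms by simp
next
  case False
  then have N_pos: "N > 0" using assms by simp
  show ?thesis
  proof (cases "p = 0")
    case True
    have "0 \<le> (q + 1) * (q + 1) * p - 2 * (q + 1) * N + N * q" by (rule quad)
    then show ?thesis using True N_pos assms by (simp add: algebra_simps) (smt (verit) mult_pos_pos)
  next
    case False
    then have p_pos: "p > 0" using assms by simp
    have "0 \<le> (N / p) * (N / p) * p - 2 * (N / p) * N + N * q" by (rule quad)
    also have "\<dots> = N * (q - N / p)" using p_pos by (simp add: field_simps power2_eq_square)
    finally have "0 \<le> q - N / p" using N_pos by (simp add: zero_le_mult_iff)
    then show ?thesis using p_pos by (simp add: field_simps)
  qed
qed

context
  fixes S :: "nat set" and \<rho> :: fock_op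
  assumes fin: "finite S" and dens: "density_supported S \<rho>"
begin

lemma density_support: "i \<notin> S \<or> j \<notin> S \<Longrightarrow> \<rho> i j = 0"
  using dens unfolding density_supported_def by blast

lemma density_hermitian: "\<rho> j i = cnj (\<rho> i j)"
  using dens unfolding density_supported_def by blast

lemma density_psd: "0 \<le> Re (\<Sum>i\<in>S. \<Sum>j\<in>S. cnj (v i) * \<rho> i j * v j)"
  using dens unfolding density_supported_def by blast

lemma density_trace: "(\<Sum>i\<in>S. \<rho> i i) = 1"
  using dens unfolding density_supported_def by blast

lemma density_diag_real: "\<rho> t t = complex_of_real (Re (\<rho> t t))"
  using density_hermitian[of t t] by (simp add: complex_eq_iff)

lemma density_diag_nonneg: "0 \<le> Re (\<rho> t t)"
proof (cases "t \<in> S")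
  case False then show ?thesis using density_support by simp
next
  case True
  define v :: "nat \<Rightarrow> complex" where "v i = (if i = t then 1 else 0)" for i
  have "(\<Sum>i\<in>S. \<Sum>j\<in>S. cnj (v i) * \<rho> i j * v j) = (\<Sum>j\<in>S. cnj (v t) * \<rho> t j * v j)"
    by (rule sum_single_index[OF fin True]) (simp add: v_def)
  also have "\<dots> = \<rho> t t"
    by (subst sum_single_index[OF fin True]) (simp_all add: v_def)
  finally show ?thesis using density_psd[of v] by simp
qed

lemma density_diag_le_one: "Re (\<rho> t t) \<le> 1"
proof (cases "t \<in> S")
  case False then show ?thesis using density_support by simp
next
  case True
  have "Re (\<rho> t t) \<le> (\<Sum>i\<in>S. Re (\<rho> i i))"
    by (rule member_le_sum) (use True fin density_diag_nonneg in auto)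
  also have "\<dots> = 1" using density_trace by (metis Re_sum one_complex.sel(1))
  finally show ?thesis .
qed

text \<open>Positivity of the 2x2 principal minor: an off-diagonal entry is dominated by the
  geometric mean of the corresponding diagonal entries.\<close>
lemma density_offdiag_sq: "(cmod (\<rho> a b))\<^sup>2 \<le> Re (\<rho> a a) * Re (\<rho> b b)"
proof -
  consider "a \<notin> S \<or> b \<notin> S" | "a = b" | "a \<in> S" "b \<in> S" "a \<noteq> b" by blast
  then show ?thesis
  proof cases
    case 1
    then show ?thesis using density_support density_diag_nonneg by simp
  next
    case 2
    have "cmod (\<rho> a a) = \<bar>Re (\<rho> a a)\<bar>" by (subst density_diag_real) (simp only: norm_of_real)
    then show ?thesis using 2 by (simp add: power2_eq_square)
  next
    case 3
    define z where "z = \<rho> a b"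
    define p where "p = Re (\<rho> a a)"
    define q where "q = Re (\<rho> b b)"
    define N where "N = (cmod z)\<^sup>2"
    have quad: "0 \<le> t * t * p - 2 * t * N + N * q" for t :: real
    proof -
      define v :: "nat \<Rightarrow> complex"
        where "v i = (if i = a then of_real t else if i = b then - cnj z else 0)" for i
      have inner: "(\<Sum>j\<in>S. cnj (v i) * \<rho> i j * v j) = cnj (v i) * \<rho> i a * v a + cnj (v i) * \<rho> i b * v b"
        for i by (rule sum_two_indices[OF fin 3]) (simp add: v_def)
      have "(\<Sum>i\<in>S. \<Sum>j\<in>S. cnj (v i) * \<rho> i j * v j)
          = (cnj (v a) * \<rho> a a * v a + cnj (v a) * \<rho> a b * v b)
            + (cnj (v b) * \<rho> b a * v a + cnj (v b) * \<rho> b b * v b)"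
        unfolding inner by (rule sum_two_indices[OF fin 3]) (simp add: v_def)
      also have "\<dots> = of_real (t * t * p) - 2 * of_real t * (z * cnj z) + of_real q * (z * cnj z)"
        using 3(3) density_diag_real[of a] density_diag_real[of b] density_hermitian[of a b]
        by (simp add: v_def p_def q_def z_def algebra_simps)
      also have "\<dots> = of_real (t * t * p - 2 * t * N + N * q)"
        unfolding N_def complex_norm_square[symmetric] by (simp add: algebra_simps)
      finally show ?thesis using density_psd[of v] by simp
    qed
    have "N \<le> p * q"
      by (rule nonneg_quadratic_discriminant[OF quad]) (simp_all add: p_def q_def N_def density_diag_nonneg)
    then show ?thesis unfolding N_def z_def p_def q_def .
  qed
qed

lemma density_offdiag_le: "cmod (\<rho> a b) \<le> Re (\<rho> a a) + Re (\<rho> b b)"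
proof (rule power2_le_imp_le)
  have "0 \<le> Re (\<rho> a a)" "0 \<le> Re (\<rho> b b)" by (rule density_diag_nonneg)+
  then have "Re (\<rho> a a) * Re (\<rho> b b) \<le> (Re (\<rho> a a) + Re (\<rho> b b))\<^sup>2"
    by (simp add: power2_eq_square algebra_simps)
  then show "(cmod (\<rho> a b))\<^sup>2 \<le> (Re (\<rho> a a) + Re (\<rho> b b))\<^sup>2"
    using density_offdiag_sq[of a b] by linarith
  show "0 \<le> Re (\<rho> a a) + Re (\<rho> b b)" using density_diag_nonneg[of a] density_diag_nonneg[of b] by simp
qed

end

text \<open>Conjugation by an arbitrary matrix M preserves positive semidefiniteness of an
  operator supported on a finite set: the quadratic form of M rho M^dag at v is the
  quadratic form of rho at M^dag v.\<close>
lemma sandwich_finite: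
  assumes "finite S" and supp: "\<And>k l. k \<notin> S \<or> l \<notin> S \<Longrightarrow> \<rho> k l = 0"
  shows "sandwich M \<rho> i j = (\<Sum>k\<in>S. \<Sum>l\<in>S. M i k * \<rho> k l * cnj (M j l))"
proof -
  have "sandwich M \<rho> i j = infsum (\<lambda>(k, l). M i k * \<rho> k l * cnj (M j l)) (S \<times> S)"
    unfolding sandwich_def by (rule infsum_cong_neutral) (use supp in force)+
  also have "\<dots> = (\<Sum>(k, l)\<in>S \<times> S. M i k * \<rho> k l * cnj (M j l))"
    using assms(1) by simp
  finally show ?thesis by (simp add: sum.cartesian_product)
qed

lemma sandwich_quadratic_form:
  assumes "finite S" and supp: "\<And>k l. k \<notin> S \<or> l \<notin> S \<Longrightarrow> \<rho> k l = 0"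
  shows "(\<Sum>i\<in>S. \<Sum>j\<in>S. cnj (v i) * sandwich M \<rho> i j * v j)
       = (\<Sum>k\<in>S. \<Sum>l\<in>S. cnj (\<Sum>i\<in>S. v i * cnj (M i k)) * \<rho> k l * (\<Sum>j\<in>S. v j * cnj (M j l)))"
proof -
  let ?f = "\<lambda>i j k l. (cnj (v i) * M i k) * \<rho> k l * (v j * cnj (M j l))"
  have entries: "sandwich M \<rho> i j = (\<Sum>k\<in>S. \<Sum>l\<in>S. M i k * \<rho> k l * cnj (M j l))" for i j
    by (rule sandwich_finite[OF assms])
  have "(\<Sum>i\<in>S. \<Sum>j\<in>S. cnj (v i) * sandwich M \<rho> i j * v j) = (\<Sum>i\<in>S. \<Sum>j\<in>S. \<Sum>k\<in>S. \<Sum>l\<in>S. ?f i j k l)"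
    unfolding entries sum_distrib_left sum_distrib_right by (intro sum.cong refl) (simp only: mult_ac)
  also have "\<dots> = (\<Sum>i\<in>S. \<Sum>k\<in>S. \<Sum>j\<in>S. \<Sum>l\<in>S. ?f i j k l)"
    by (intro sum.cong refl sum.swap)
  also have "\<dots> = (\<Sum>k\<in>S. \<Sum>i\<in>S. \<Sum>l\<in>S. \<Sum>j\<in>S. ?f i j k l)"
    by (subst sum.swap) (intro sum.cong refl sum.swap)
  also have "\<dots> = (\<Sum>k\<in>S. \<Sum>l\<in>S. \<Sum>i\<in>S. \<Sum>j\<in>S. ?f i j k l)"
    by (intro sum.cong refl sum.swap)
  also have "\<dots> = (\<Sum>k\<in>S. \<Sum>l\<in>S. (\<Sum>i\<in>S. cnj (v i) * M i k) * \<rho> k l * (\<Sum>j\<in>S. v j * cnj (M j l)))"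
    unfolding sum_distrib_left sum_distrib_right by (intro sum.cong refl sum.swap)
  finally show ?thesis by simp
qed

lemma sandwich_psd:
  assumes "finite S" and supp: "\<And>k l. k \<notin> S \<or> l \<notin> S \<Longrightarrow> \<rho> k l = 0"
    and psd: "\<And>w. 0 \<le> Re (\<Sum>i\<in>S. \<Sum>j\<in>S. cnj (w i) * \<rho> i j * w j)"
  shows "0 \<le> Re (\<Sum>i\<in>S. \<Sum>j\<in>S. cnj (v i) * sandwich M \<rho> i j * v j)"
  using sandwich_quadratic_form[OF assms(1,2), where v = v and M = M] psd[of "\<lambda>k. \<Sum>i\<in>S. v i * cnj (M i k)"] by simp
lemma shift_channel_support:
  assumes "G D = 0" and supp: "\<And>k l. D < k \<or> D < l \<Longrightarrow> \<rho> k l = 0" and "D < i \<or> D < j"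
  shows "shift_channel G E N \<rho> i j = 0"
proof -
  have "(if 0 < i \<and> 0 < j then complex_of_real (G (i - 1)) * \<rho> (i - 1) (j - 1)
          * complex_of_real (G (j - 1)) else 0) = 0"
    using assms by (cases "D < i - 1 \<or> D < j - 1") (auto simp: not_less le_less)
  moreover have "\<rho> (i + 1) (j + 1) = 0" using assms by auto
  ultimately show ?thesis unfolding shift_channel_def using assms by simp
qed

lemma shift_channel_hermitian:
  assumes "\<And>k l. \<rho> l k = cnj (\<rho> k l)"
  shows "shift_channel G E N \<rho> j i = cnj (shift_channel G E N \<rho> i j)"
  unfolding shift_channel_def assms[of "i - 1" "j - 1"] assms[of i j] assms[of "i + 1" "j + 1"]
  by (simp add: mult_ac)

lemma shift_channel_trace:
  assumes "G D = 0" "N 0 = 0" and norm: "\<And>k. (G k)\<^sup>2 + (E k)\<^sup>2 + (N k)\<^sup>2 = 1"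
    and supp: "\<And>k l. D < k \<or> D < l \<Longrightarrow> \<rho> k l = 0"
  shows "(\<Sum>i\<le>D. shift_channel G E N \<rho> i i) = (\<Sum>i\<le>D. \<rho> i i)"
proof -
  define w where "w F i = complex_of_real ((F i)\<^sup>2) * \<rho> i i" for F :: "nat \<Rightarrow> real" and i
  have diag: "shift_channel G E N \<rho> i i = (if 0 < i then w G (i - 1) else 0) + w E i + w N (Suc i)" for i
    unfolding shift_channel_def w_def by (simp add: power2_eq_square algebra_simps)
  have "(\<Sum>i\<le>D. (if 0 < i then w G (i - 1) else 0)) = (\<Sum>i<D. w G i)"
    by (subst sum.atMost_shift) simp
  also have "\<dots> = (\<Sum>i\<le>D. w G i)"
    using assms(1) by (simp add: lessThan_Suc_atMost[symmetric] w_def)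
  finally have raised: "(\<Sum>i\<le>D. (if 0 < i then w G (i - 1) else 0)) = (\<Sum>i\<le>D. w G i)" .
  have lowered: "(\<Sum>i\<le>D. w N (Suc i)) = (\<Sum>i\<le>D. w N i)"
    using sum.atMost_Suc_shift[of "w N" D] assms(2) supp[of "Suc D" "Suc D"] by (simp add: w_def)
  have "(\<Sum>i\<le>D. shift_channel G E N \<rho> i i) = (\<Sum>i\<le>D. w G i + w E i + w N i)"
    unfolding diag sum.distrib raised lowered ..
  also have "\<dots> = (\<Sum>i\<le>D. \<rho> i i)"
  proof (intro sum.cong refl)
    fix i
    have "w G i + w E i + w N i = complex_of_real ((G i)\<^sup>2 + (E i)\<^sup>2 + (N i)\<^sup>2) * \<rho> i i"
      unfolding w_def by (simp add: algebra_simps)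
    then show "w G i + w E i + w N i = \<rho> i i" by (simp add: norm)
  qed
  finally show ?thesis .
qed

text \<open>Phi maps density operators on H_0^D to density operators on H_0^D whenever M_g cannot
  leave H_0^D; positivity comes from the Kraus form, the rest from the shift-channel form.\<close>
lemma Phi_preserves_density:
  assumes top: "g_coef nbar \<theta>2 D = 0" and dens: "density_supported {..D} \<rho>"
  shows "density_supported {..D} (Phi nbar \<theta>2 \<phi> \<rho>)"
proof -
  have fin: "finite {..D}" by simp
  note supp = density_support[OF fin dens]
  have supp': "D < k \<or> D < l \<Longrightarrow> \<rho> k l = 0" for k l using supp by auto
  have m0: "m_coef nbar \<theta>2 0 = 0" by (simp add: m_coef_def)
  have psd: "0 \<le> Re (\<Sum>i\<le>D. \<Sum>j\<le>D. cnj (v i) * Phi nbar \<theta>2 \<phi> \<rho> i j * v j)" for v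
  proof -
    let ?q = "\<lambda>M. \<Sum>i\<le>D. \<Sum>j\<le>D. cnj (v i) * sandwich M \<rho> i j * v j"
    have "(\<Sum>i\<le>D. \<Sum>j\<le>D. cnj (v i) * Phi nbar \<theta>2 \<phi> \<rho> i j * v j)
        = ?q (Mg nbar \<theta>2) + ?q (Me nbar \<theta>2) + ?q (Mm nbar \<theta>2 \<phi>)"
      unfolding Phi_def by (simp add: sum.distrib algebra_simps)
    then show ?thesis
      using sandwich_psd[OF fin supp density_psd[OF fin dens]] by simp
  qed
  have herm: "\<And>k l. \<rho> l k = cnj (\<rho> k l)" by (rule density_hermitian[OF fin dens])
  show ?thesis
    unfolding density_supported_def
  proof (intro conjI allI impI)
    show "Phi nbar \<theta>2 \<phi> \<rho> i j = 0" if "i \<notin> {..D} \<or> j \<notin> {..D}" for i j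
      unfolding Phi_shift_channel using that
      by (intro shift_channel_support[of "g_coef nbar \<theta>2", OF top supp']) auto
    show "Phi nbar \<theta>2 \<phi> \<rho> j i = cnj (Phi nbar \<theta>2 \<phi> \<rho> i j)" for i j
      unfolding Phi_shift_channel by (rule shift_channel_hermitian[OF herm])
    show "0 \<le> Re (\<Sum>i\<le>D. \<Sum>j\<le>D. cnj (v i) * Phi nbar \<theta>2 \<phi> \<rho> i j * v j)" for v
      by (rule psd)
    show "(\<Sum>i\<le>D. Phi nbar \<theta>2 \<phi> \<rho> i i) = 1"
      using shift_channel_trace[of "g_coef nbar \<theta>2", OF top m0 coef_completeness supp']
        density_trace[OF fin dens]
      by (simp add: Phi_shift_channel atMost_def)
  qed
qed

text \<open>Spectral facts for the levels nbar and D = 9 nbar + 8. Since sqrt(D + 1) = 3 sqrt(nbar + 1),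
  theta1 sqrt(k + 1) equals pi at k = nbar and 3 pi at k = D: both levels are reflected by M_e
  (coefficient -1), and M_g cannot leave H_0^D.\<close>
lemma theta1_times_sqrt: "theta1 n * sqrt x = pi * (sqrt x / sqrt (real n + 1))"
  unfolding theta1_def by simp

lemma theta1_nbar: "theta1 n * sqrt (real n + 1) = pi"
  unfolding theta1_times_sqrt by simp

lemma sqrt_top_level: "sqrt (real (9 * n + 8) + 1) = 3 * sqrt (real n + 1)"
proof -
  have "real (9 * n + 8) + 1 = 3\<^sup>2 * (real n + 1)" by simp
  then show ?thesis by (simp only: real_sqrt_mult real_sqrt_abs)
qed

lemma theta1_top_level: "theta1 n * sqrt (real (9 * n + 8) + 1) = 3 * pi"
  unfolding sqrt_top_level using theta1_nbar[of n] by (simp add: algebra_simps)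

lemma g_coef_top_level: "g_coef n \<theta>2 (9 * n + 8) = 0"
  unfolding g_coef_def theta1_top_level using sin_npi[of 3] by simp

lemma e_coef_nbar: "e_coef n \<theta>2 n = -1"
  unfolding e_coef_def theta1_nbar by simp

lemma e_coef_top_level: "e_coef n \<theta>2 (9 * n + 8) = -1"
proof -
  have three_halves: "3 * pi / 2 = pi + pi / 2" by simp
  have "cos (3 * pi / 2) = 0" "sin (3 * pi / 2) = -1"
    unfolding three_halves cos_add sin_add by simp_all
  then show ?thesis unfolding e_coef_def theta1_top_level by simp
qed

text \<open>The nondegeneracy hypothesis sin(theta2 sqrt k) \<noteq> 0 forces both
  1 + cos(theta2 sqrt k / 2) \<noteq> 0 and sin(theta2 sqrt k / 2) \<noteq> 0, by the double angle formula.\<close>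
lemma half_angle_nonzero:
  fixes y :: real
  assumes "sin (2 * y) \<noteq> 0"
  shows "1 + cos y \<noteq> 0" and "sin y \<noteq> 0"
proof -
  show "sin y \<noteq> 0" using assms by (auto simp: sin_double)
  show "1 + cos y \<noteq> 0"
  proof
    assume "1 + cos y = 0"
    then have "cos y = -1" by simp
    then have "sin y = 0" using sin_cos_squared_add[of y] by (simp add: power2_eq_square)
    then show False using assms by (simp add: sin_double)
  qed
qed

lemma g_coef_below_nbar:
  assumes H: "\<forall>m\<in>{1..9 * n + 8}. sin (\<theta>2 * sqrt (real m)) \<noteq> 0" and "t < n"
  shows "g_coef n \<theta>2 t \<noteq> 0"
proof -
  define r where "r = sqrt (real t + 1) / sqrt (real n + 1)"
  have "0 < r" "r < 1" using assms(2) by (simp_all add: r_def divide_less_eq)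
  then have "sin (pi * r) > 0" by (intro sin_gt_zero) auto
  moreover have "1 + cos (\<theta>2 * sqrt (real t) / 2) \<noteq> 0"
  proof (cases "t = 0")
    case False
    then have "sin (2 * (\<theta>2 * sqrt (real t) / 2)) \<noteq> 0" using H assms(2) by auto
    then show ?thesis by (rule half_angle_nonzero)
  qed simp
  ultimately show ?thesis unfolding g_coef_def theta1_times_sqrt r_def by simp
qed

lemma m_coef_between_levels:
  assumes H: "\<forall>m\<in>{1..9 * n + 8}. sin (\<theta>2 * sqrt (real m)) \<noteq> 0" and "n < t" "t < 9 * n + 8"
  shows "m_coef n \<theta>2 t \<noteq> 0"
proof -
  define r where "r = sqrt (real t + 1) / sqrt (real n + 1)"
  have "sqrt (real t + 1) < sqrt (real (9 * n + 8) + 1)" using assms(3) by simp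
  then have "r < 3" unfolding sqrt_top_level r_def by (simp add: divide_less_eq)
  moreover have "1 < r" using assms(2) by (simp add: r_def less_divide_eq)
  ultimately have "cos (pi * r / 2 - pi) > 0" by (intro cos_gt_zero_pi) (auto simp: field_simps)
  then have "cos (pi * r / 2) \<noteq> 0" by (simp add: cos_diff)
  moreover have "sin (2 * (\<theta>2 * sqrt (real t) / 2)) \<noteq> 0" using H assms by auto
  then have "sin (\<theta>2 * sqrt (real t) / 2) \<noteq> 0" by (rule half_angle_nonzero)
  ultimately show ?thesis unfolding m_coef_def theta1_times_sqrt r_def by simp
qed

lemma density_limit:
  assumes fin: "finite S" and dens: "\<And>k. density_supported S (r k)" and "T \<subseteq> S"
    and lim: "\<And>i j. (\<lambda>k. r k i j) \<longlonglongrightarrow> L i j"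
    and outside: "\<And>i j. i \<notin> T \<or> j \<notin> T \<Longrightarrow> L i j = 0"
  shows "density_supported T L"
  unfolding density_supported_def
proof (intro conjI allI impI)
  show "L i j = 0" if "i \<notin> T \<or> j \<notin> T" for i j using outside that .
  show "L j i = cnj (L i j)" for i j
  proof -
    have "(\<lambda>k. cnj (r k i j)) \<longlonglongrightarrow> cnj (L i j)" by (intro tendsto_cnj lim)
    moreover have "(\<lambda>k. cnj (r k i j)) = (\<lambda>k. r k j i)"
      by (rule ext) (rule density_hermitian[OF fin dens, symmetric])
    ultimately have "(\<lambda>k. r k j i) \<longlonglongrightarrow> cnj (L i j)" by simp
    then show ?thesis using LIMSEQ_unique[OF lim] by blast
  qed
  show "0 \<le> Re (\<Sum>i\<in>T. \<Sum>j\<in>T. cnj (v i) * L i j * v j)" for v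
  proof -
    define v' where "v' i = (if i \<in> T then v i else 0)" for i
    have restrict: "(\<Sum>i\<in>S. \<Sum>j\<in>S. cnj (v' i) * X i j * v' j) = (\<Sum>i\<in>T. \<Sum>j\<in>T. cnj (v i) * X i j * v j)"
      for X :: fock_op
    proof -
      have "(\<Sum>i\<in>S. \<Sum>j\<in>S. cnj (v' i) * X i j * v' j) = (\<Sum>i\<in>T. \<Sum>j\<in>S. cnj (v' i) * X i j * v' j)"
        by (rule sum.mono_neutral_right) (use fin \<open>T \<subseteq> S\<close> in \<open>auto simp: v'_def\<close>)
      also have "\<dots> = (\<Sum>i\<in>T. \<Sum>j\<in>T. cnj (v' i) * X i j * v' j)"
        by (intro sum.cong refl sum.mono_neutral_right) (use fin \<open>T \<subseteq> S\<close> in \<open>auto simp: v'_def\<close>)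
      finally show ?thesis by (simp add: v'_def)
    qed
    have "(\<lambda>k. Re (\<Sum>i\<in>T. \<Sum>j\<in>T. cnj (v i) * r k i j * v j))
          \<longlonglongrightarrow> Re (\<Sum>i\<in>T. \<Sum>j\<in>T. cnj (v i) * L i j * v j)"
      by (intro tendsto_Re tendsto_sum tendsto_mult tendsto_const lim)
    moreover have "0 \<le> Re (\<Sum>i\<in>T. \<Sum>j\<in>T. cnj (v i) * r k i j * v j)" for k
      using density_psd[OF fin dens[of k], of v'] unfolding restrict .
    ultimately show ?thesis by (intro LIMSEQ_le_const) auto
  qed
  show "(\<Sum>i\<in>T. L i i) = 1"
  proof -
    have "(\<lambda>k. \<Sum>i\<in>S. r k i i) \<longlonglongrightarrow> (\<Sum>i\<in>S. L i i)" by (intro tendsto_sum lim)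
    moreover have "(\<lambda>k. \<Sum>i\<in>S. r k i i) = (\<lambda>k. 1)" using density_trace[OF fin dens] by simp
    ultimately have "(\<Sum>i\<in>S. L i i) = 1" using LIMSEQ_unique tendsto_const by metis
    moreover have "(\<Sum>i\<in>S. L i i) = (\<Sum>i\<in>T. L i i)"
      by (rule sum.mono_neutral_right) (use fin \<open>T \<subseteq> S\<close> outside in auto)
    ultimately show ?thesis by simp
  qed
qed

lemma density_entry_vanish:
  assumes fin: "finite S" and dens: "\<And>k. density_supported S (r k)"
    and pop: "(\<lambda>k. Re (r k t t)) \<longlonglongrightarrow> 0" and "t = i \<or> t = j"
  shows "(\<lambda>k. r k i j) \<longlonglongrightarrow> 0"
proof (rule tendsto_norm_zero_cancel)
  have bound: "norm (r k i j) \<le> sqrt (Re (r k t t))" for k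
  proof (rule real_le_rsqrt)
    note nonneg = density_diag_nonneg[OF fin dens] and le_one = density_diag_le_one[OF fin dens]
    have "Re (r k i i) * Re (r k j j) \<le> Re (r k t t)"
      using \<open>t = i \<or> t = j\<close>
    proof
      assume "t = i"
      then show ?thesis using mult_right_le_one_le[OF nonneg[of k i] nonneg[of k j] le_one[of k j]] by simp
    next
      assume "t = j"
      then show ?thesis using mult_left_le_one_le[OF nonneg[of k j] nonneg[of k i] le_one[of k i]] by simp
    qed
    then show "(norm (r k i j))\<^sup>2 \<le> Re (r k t t)"
      using density_offdiag_sq[OF fin dens, of k i j] by simp
  qed
  have "(\<lambda>k. sqrt (Re (r k t t))) \<longlonglongrightarrow> 0"
    using tendsto_real_sqrt[OF pop] by simp
  then show "(\<lambda>k. norm (r k i j)) \<longlonglongrightarrow> 0"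
    by (rule Lim_null_comparison[rotated]) (simp add: bound)
qed

lemma summable_of_bounded_increase:
  fixes P x :: "nat \<Rightarrow> real"
  assumes inc: "\<And>k. P k + w * x k \<le> P (Suc k)" and "w > 0" and x_nonneg: "\<And>k. 0 \<le> x k"
    and bounded: "\<And>k. P k \<le> B"
  shows "summable x"
proof (rule summableI_nonneg_bounded[where x = "(B - P 0) / w"])
  show "0 \<le> x n" for n by (rule x_nonneg)
  have "w * (\<Sum>i<n. x i) \<le> P n - P 0" for n
  proof (induction n)
    case (Suc n) then show ?case using inc[of n] by (simp add: algebra_simps)
  qed simp
  then have "w * (\<Sum>i<n. x i) \<le> B - P 0" for n
    using bounded[of n] by (smt (verit))
  then show "(\<Sum>i<n. x i) \<le> (B - P 0) / w" for n
    using \<open>w > 0\<close> by (simp add: pos_le_divide_eq mult.commute)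
qed

lemma summable_of_dominated_shift:
  fixes y x :: "nat \<Rightarrow> real"
  assumes "summable y" and dom: "\<And>k. w * x k \<le> y (Suc k)" and "w > 0" and x_nonneg: "\<And>k. 0 \<le> x k"
  shows "summable x"
proof (rule summable_comparison_test'[where N = 0])
  show "summable (\<lambda>k. y (Suc k) / w)"
    using assms(1) by (simp add: summable_Suc_iff summable_divide)
  show "norm (x n) \<le> y (Suc n) / w" for n
    using dom[of n] x_nonneg[of n] \<open>w > 0\<close> by (simp add: pos_le_divide_eq mult.commute)
qed

lemma convergent_of_summable_increments:
  fixes x c :: "nat \<Rightarrow> complex"
  assumes step: "\<And>k. x (Suc k) = x k + c k" and "summable (\<lambda>k. norm (c k))"
  shows "convergent x"
proof -
  have x_eq: "x k = x 0 + (\<Sum>i<k. c i)" for k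
    by (induction k) (simp_all add: step)
  have "(\<lambda>k. x 0 + (\<Sum>i<k. c i)) \<longlonglongrightarrow> x 0 + suminf c"
    by (intro tendsto_add tendsto_const summable_LIMSEQ summable_norm_cancel[OF assms(2)])
  then show ?thesis unfolding x_eq[symmetric] convergent_def by blast
qed

locale shift_orbit =
  fixes D n :: nat and G E N :: "nat \<Rightarrow> real" and r :: "nat \<Rightarrow> fock_op"
  assumes dens: "\<And>k. density_supported {..D} (r k)"
    and step: "\<And>k. r (Suc k) = shift_channel G E N (r k)"
    and levels: "0 < n" "Suc n < D"
    and reflect: "E D = E n" "(E n)\<^sup>2 = 1"
    and G_nonzero: "\<And>t. t < n \<Longrightarrow> G t \<noteq> 0"
    and N_nonzero: "\<And>t. n < t \<Longrightarrow> t < D \<Longrightarrow> N t \<noteq> 0"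
begin

definition pop :: "nat \<Rightarrow> nat \<Rightarrow> real" where
  "pop k t = Re (r k t t)"

lemma finite_levels: "finite {..D}" by simp

lemma pop_nonneg: "0 \<le> pop k t"
  unfolding pop_def by (rule density_diag_nonneg[OF finite_levels dens])

lemma pop_le_one: "pop k t \<le> 1"
  unfolding pop_def by (rule density_diag_le_one[OF finite_levels dens])

lemma pop_above_top: "D < t \<Longrightarrow> pop k t = 0"
  unfolding pop_def using density_support[OF finite_levels dens, of t t k] by simp

lemma pop_step: "pop (Suc k) t = (if 0 < t then (G (t - 1))\<^sup>2 * pop k (t - 1) else 0)
    + (E t)\<^sup>2 * pop k t + (N (t + 1))\<^sup>2 * pop k (t + 1)"
proof -
  have diag: "r k s s = complex_of_real (pop k s)" for s
    unfolding pop_def by (rule density_diag_real[OF finite_levels dens])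
  show ?thesis
    unfolding pop_def[of "Suc k"] step shift_channel_def diag by (simp add: power2_eq_square)
qed

lemma pop_raise: "(G t)\<^sup>2 * pop k t \<le> pop (Suc k) (Suc t)"
  using pop_step[of k "Suc t"] pop_nonneg[of k "Suc t"] pop_nonneg[of k "Suc (Suc t)"] by simp

lemma pop_lower: "(N (Suc t))\<^sup>2 * pop k (Suc t) \<le> pop (Suc k) t"
  using pop_step[of k t] pop_nonneg[of k t] pop_nonneg[of k "t - 1"] by simp

lemma pop_nbar:
  "pop (Suc k) n = pop k n + (G (n - 1))\<^sup>2 * pop k (n - 1) + (N (n + 1))\<^sup>2 * pop k (n + 1)"
  using pop_step[of k n] levels reflect by simp

text \<open>Below n: level n - 1 feeds the nondecreasing bounded population of n, so its population
  is summable; level t - 1 feeds level t, so summability propagates downwards.\<close>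
lemma pop_summable_below: "t < n \<Longrightarrow> summable (\<lambda>k. pop k t)"
proof -
  have "Suc d \<le> n \<Longrightarrow> summable (\<lambda>k. pop k (n - Suc d))" for d
  proof (induction d)
    case 0
    show ?case
    proof (rule summable_of_bounded_increase[where P = "\<lambda>k. pop k n" and B = 1])
      show "pop k n + (G (n - 1))\<^sup>2 * pop k (n - Suc 0) \<le> pop (Suc k) n" for k
        using pop_nbar[of k] pop_nonneg[of k "n + 1"] by simp
    qed (use G_nonzero levels pop_nonneg pop_le_one in auto)
  next
    case (Suc d)
    let ?t = "n - Suc (Suc d)"
    have shift: "Suc ?t = n - Suc d" using Suc.prems by simp
    show ?case
    proof (rule summable_of_dominated_shift[where y = "\<lambda>k. pop k (n - Suc d)"])
      show "summable (\<lambda>k. pop k (n - Suc d))" using Suc by simp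
      show "(G ?t)\<^sup>2 * pop k ?t \<le> pop (Suc k) (n - Suc d)" for k
        using pop_raise[of ?t k] unfolding shift .
    qed (use G_nonzero Suc.prems pop_nonneg in auto)
  qed
  moreover assume "t < n"
  then have "t = n - Suc (n - Suc t)" "Suc (n - Suc t) \<le> n" by auto
  ultimately show ?thesis by metis
qed

text \<open>Between n and D: level n + 1 feeds level n, and level t + 1 feeds level t, so
  summability propagates upwards.\<close>
lemma pop_summable_between: "n < t \<Longrightarrow> t < D \<Longrightarrow> summable (\<lambda>k. pop k t)"
proof -
  have "n + 1 + d < D \<Longrightarrow> summable (\<lambda>k. pop k (n + 1 + d))" for d
  proof (induction d)
    case 0
    show ?case
    proof (rule summable_of_bounded_increase[where P = "\<lambda>k. pop k n" and B = 1])
      show "pop k n + (N (n + 1))\<^sup>2 * pop k (n + 1 + 0) \<le> pop (Suc k) n" for k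
        using pop_nbar[of k] pop_nonneg[of k "n - 1"] by simp
    qed (use N_nonzero levels pop_nonneg pop_le_one in auto)
  next
    case (Suc d)
    show ?case
    proof (rule summable_of_dominated_shift[where y = "\<lambda>k. pop k (n + 1 + d)"])
      show "summable (\<lambda>k. pop k (n + 1 + d))" using Suc by simp
      show "(N (n + 1 + Suc d))\<^sup>2 * pop k (n + 1 + Suc d) \<le> pop (Suc k) (n + 1 + d)" for k
        using pop_lower[of "n + 1 + d" k] by simp
    qed (use N_nonzero Suc.prems pop_nonneg in auto)
  qed
  moreover assume "n < t" "t < D"
  then have "t = n + 1 + (t - n - 1)" by simp
  ultimately show ?thesis using \<open>t < D\<close> by metis
qed

lemma pop_summable: "t \<notin> {n, D} \<Longrightarrow> summable (\<lambda>k. pop k t)"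
  using pop_summable_below pop_summable_between pop_above_top
  by (cases t n rule: linorder_cases; cases t D rule: linorder_cases) auto

lemma entry_vanish: "i \<notin> {n, D} \<or> j \<notin> {n, D} \<Longrightarrow> (\<lambda>k. r k i j) \<longlonglongrightarrow> 0"
proof -
  assume "i \<notin> {n, D} \<or> j \<notin> {n, D}"
  then obtain t where "t = i \<or> t = j" "t \<notin> {n, D}" by blast
  moreover have "(\<lambda>k. Re (r k t t)) \<longlonglongrightarrow> 0"
    using summable_LIMSEQ_zero[OF pop_summable[OF \<open>t \<notin> {n, D}\<close>]] unfolding pop_def .
  ultimately show ?thesis using density_entry_vanish[of "{..D}" r t i j] dens by simp
qed

lemma weighted_entry_bound:
  "norm (complex_of_real a * r k p q * complex_of_real b) \<le> \<bar>a\<bar> * \<bar>b\<bar> * (pop k p + pop k q)"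
proof -
  have "norm (r k p q) \<le> pop k p + pop k q"
    unfolding pop_def by (rule density_offdiag_le[OF finite_levels dens])
  then have "\<bar>a\<bar> * \<bar>b\<bar> * norm (r k p q) \<le> \<bar>a\<bar> * \<bar>b\<bar> * (pop k p + pop k q)"
    by (intro mult_left_mono) auto
  then show ?thesis by (simp add: norm_mult ac_simps)
qed

text \<open>Entries between the reflecting levels change only through their transient
  neighbours, whose populations are summable; hence they converge.\<close>
lemma entry_convergent:
  assumes "i \<in> {n, D}" "j \<in> {n, D}"
  shows "convergent (\<lambda>k. r k i j)"
proof -
  have pos: "0 < i" "0 < j" using assms levels by auto
  have transient: "a - 1 \<notin> {n, D}" "a + 1 \<notin> {n, D}" if "a \<in> {n, D}" for a
    using that levels by auto
  have "E i * E j = 1" using assms reflect by (auto simp: power2_eq_square)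
  then have reflected: "complex_of_real (E i) * complex_of_real (E j) = 1"
    by (metis of_real_1 of_real_mult)
  define c where "c k = complex_of_real (G (i - 1)) * r k (i - 1) (j - 1) * complex_of_real (G (j - 1))
      + complex_of_real (N (i + 1)) * r k (i + 1) (j + 1) * complex_of_real (N (j + 1))" for k
  define g where "g k = \<bar>G (i - 1)\<bar> * \<bar>G (j - 1)\<bar> * (pop k (i - 1) + pop k (j - 1))
      + \<bar>N (i + 1)\<bar> * \<bar>N (j + 1)\<bar> * (pop k (i + 1) + pop k (j + 1))" for k
  show ?thesis
  proof (rule convergent_of_summable_increments[where c = c])
    show "r (Suc k) i j = r k i j + c k" for k
    proof -
      have "complex_of_real (E i) * r k i j * complex_of_real (E j)
          = (complex_of_real (E i) * complex_of_real (E j)) * r k i j" by (simp add: ac_simps)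
      then show ?thesis unfolding step shift_channel_def c_def using pos reflected by simp
    qed
    show "summable (\<lambda>k. norm (c k))"
    proof (rule summable_comparison_test'[where g = g and N = 0])
      show "summable g"
        unfolding g_def using assms
        by (intro summable_add summable_mult pop_summable transient)
      show "norm (norm (c k)) \<le> g k" for k
        unfolding c_def g_def using weighted_entry_bound
        by (simp add: norm_triangle_le add_mono)
    qed
  qed
qed

lemma orbit_limit: "\<exists>\<rho>inf. density_supported {n, D} \<rho>inf \<and> (\<forall>i j. (\<lambda>k. r k i j) \<longlonglongrightarrow> \<rho>inf i j)"
proof -
  have "convergent (\<lambda>k. r k i j)" for i j
    using entry_convergent entry_vanish convergent_def by blast
  then obtain L where lim: "\<And>i j. (\<lambda>k. r k i j) \<longlonglongrightarrow> L i j"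
    unfolding convergent_def by metis
  have "density_supported {n, D} L"
  proof (rule density_limit[OF finite_levels dens _ lim])
    show "{n, D} \<subseteq> {..D}" using levels by auto
    show "L i j = 0" if "i \<notin> {n, D} \<or> j \<notin> {n, D}" for i j
      using LIMSEQ_unique[OF lim entry_vanish[OF that]] .
  qed
  then show ?thesis using lim by blast
qed

end

lemma invariant_Mg:
  assumes "g_coef nbar \<theta>2 D = 0"
  shows "invariant_sub D (Mg nbar \<theta>2)"
  unfolding invariant_sub_def Mg_entry
proof (intro allI impI)
  fix i k assume "k \<le> D" "D < i"
  then show "(if i = k + 1 then complex_of_real (g_coef nbar \<theta>2 k) else 0) = 0"
    using assms by (cases "k = D") auto
qed

lemma invariant_Me: "invariant_sub D (Me nbar \<theta>2)"
  unfolding invariant_sub_def Me_entry by auto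

lemma invariant_Mm: "invariant_sub D (Mm nbar \<theta>2 \<phi>)"
  unfolding invariant_sub_def Mm_entry by auto

theorem mainTheorem3:
  fixes nbar :: nat and \<theta>2 \<phi> :: real
  assumes "nbar \<ge> 1" and "\<theta>2 > 0"
    and "\<forall>n\<in>{1..9 * nbar + 8}. sin (\<theta>2 * sqrt (real n)) \<noteq> 0"
  shows "invariant_sub (9 * nbar + 8) (Mg nbar \<theta>2)
       \<and> invariant_sub (9 * nbar + 8) (Me nbar \<theta>2)
       \<and> invariant_sub (9 * nbar + 8) (Mm nbar \<theta>2 \<phi>)
       \<and> (\<forall>\<rho>0. density_supported {..9 * nbar + 8} \<rho>0 \<longrightarrow>
            (\<exists>\<rho>inf. density_supported {nbar, 9 * nbar + 8} \<rho>inf \<and>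
               (\<forall>i j. (\<lambda>k. ((Phi nbar \<theta>2 \<phi> ^^ k) \<rho>0) i j) \<longlonglongrightarrow> \<rho>inf i j)))"
proof (intro conjI allI impI)
  show "invariant_sub (9 * nbar + 8) (Mg nbar \<theta>2)" by (rule invariant_Mg[OF g_coef_top_level])
  show "invariant_sub (9 * nbar + 8) (Me nbar \<theta>2)" by (rule invariant_Me)
  show "invariant_sub (9 * nbar + 8) (Mm nbar \<theta>2 \<phi>)" by (rule invariant_Mm)
  fix \<rho>0 assume init: "density_supported {..9 * nbar + 8} \<rho>0"
  define r where "r k = (Phi nbar \<theta>2 \<phi> ^^ k) \<rho>0" for k
  have dens: "density_supported {..9 * nbar + 8} (r k)" for k
    by (induction k) (simp_all add: r_def init Phi_preserves_density g_coef_top_level)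
  interpret shift_orbit "9 * nbar + 8" nbar "g_coef nbar \<theta>2" "e_coef nbar \<theta>2" "m_coef nbar \<theta>2" r
  proof
    show "r (Suc k) = shift_channel (g_coef nbar \<theta>2) (e_coef nbar \<theta>2) (m_coef nbar \<theta>2) (r k)" for k
      by (simp add: r_def Phi_shift_channel)
  qed (use assms dens g_coef_below_nbar m_coef_between_levels in
        \<open>auto simp: e_coef_nbar e_coef_top_level\<close>)
  show "\<exists>\<rho>inf. density_supported {nbar, 9 * nbar + 8} \<rho>inf \<and>
          (\<forall>i j. (\<lambda>k. ((Phi nbar \<theta>2 \<phi> ^^ k) \<rho>0) i j) \<longlonglongrightarrow> \<rho>inf i j)"
    using orbit_limit unfolding r_def .
qed

end
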